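(* Restrict attention to feasible strategies $\boldsymbol{\phi}\in\mathcal{D}_{\boldsymbol{\phi}}(\boldsymbol{r})$ whose traffic satisfies $t_i(a,k)>0$ for all $i\in\mathcal{V}$ and $(a,k)\in\mathcal{S}$. On this set the map $\boldsymbol{\phi}\mapsto\boldsymbol{f}(\boldsymbol{\phi})=[f_{ij}(a,k),g_i(a,k)]$ is a bijection onto its image, with inverse $\boldsymbol{f}\mapsto\boldsymbol{\phi}(\boldsymbol{f})$ given by $\phi_{ij}(a,k)=f_{ij}(a,k)/t_i(a,k)$ and $\phi_{i0}(a,k)=g_i(a,k)/t_i(a,k)$, where $t_i(a,k)$ is computed from $\boldsymbol{f}$ by $t_i(a,k)=\sum_j f_{ij}(a,k)+g_i(a,k)$ (plus, if $k=|\mathcal{T}_a|$ and $i=d_a$, the arriving traffic). Moreover, $T$ is geodesically convex in $\boldsymbol{\phi}$ on this set: for any two such strategies $\boldsymbol{\phi}_1,\boldsymbol{\phi}_2$, the curve $\gamma_{\boldsymbol{\phi}_1\boldsymbol{\phi}_2}(s)=\boldsymbol{\phi}\big((1-s)\boldsymbol{f}(\boldsymbol{\phi}_1)+s\,\boldsymbol{f}(\boldsymbol{\phi}_2)\big)$, $s\in[0,1]$, joins $\boldsymbol{\phi}_1$ and $\boldsymbol{\phi}_2$ within the feasible set, and $s\mapsto T(\gamma_{\boldsymbol{\phi}_1\boldsymbol{\phi}_2}(s))$ is convex on $[0,1]$.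
   Context: Service-chain computing network model. $\mathcal{G}=(\mathcal{V},\mathcal{E})$ is a directed, strongly connected graph whose links are bidirectional. $\mathcal{A}$ is a finite set of applications; application $a$ has a destination $d_a\in\mathcal{V}$ and a chain of $|\mathcal{T}_a|$ tasks performed in order. The set of stages is $\mathcal{S}=\{(a,k): a\in\mathcal{A}, k=0,1,\dots,|\mathcal{T}_a|\}$, with packet sizes $L_{(a,k)}>0$. Exogenous input rates are $r_i(a)\ge 0$. The forwarding strategy $\boldsymbol{\phi}=[\phi_{ij}(a,k)]_{(a,k)\in\mathcal{S},i\in\mathcal{V},j\in\{0\}\cup\mathcal{V}}$ has $\phi_{ij}(a,k)\in[0,1]$; for $j\in\mathcal{V}$ it is the fraction of node $i$'s stage-$(a,k)$ traffic sent to node $j$ (with $\phi_{ij}(a,k)=0$ if $(i,j)\notin\mathcal{E}$), and $\phi_{i0}(a,k)$ is the fraction sent to $i$'s local processor, which converts each stage-$(a,k)$ packet into one stage-$(a,k+1)$ packet; $\phi_{i0}(a,|\mathcal{T}_a|)=0$. Flow conservation: $\sum_{j\in\{0\}\cup\mathcal{V}}\phi_{ij}(a,k)=0$ if $k=|\mathcal{T}_a|$ and $i=d_a$, and $=1$ otherwise. Traffic $t_i(a,k)$ satisfies $t_i(a,0)=\sum_{j\in\mathcal{V}}t_j(a,0)\phi_{ji}(a,0)+r_i(a)$ and, for $k\ge1$, $t_i(a,k)=\sum_{j\in\mathcal{V}}t_j(a,k)\phi_{ji}(a,k)+t_i(a,k-1)\phi_{i0}(a,k-1)$. Link flows $f_{ij}(a,k)=t_i(a,k)\phi_{ij}(a,k)$,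 processor inputs $g_i(a,k)=t_i(a,k)\phi_{i0}(a,k)$; the flow vector $\boldsymbol{f}=[f_{ij}(a,k),g_i(a,k)]$ satisfies the linear conservation $\sum_j f_{ji}(a,k)+g_i(a,k-1)=\sum_j f_{ij}(a,k)+g_i(a,k)$ (with $g_i(a,-1):=r_i(a)$, and the right side replaced by $0$ plus the exiting traffic at $i=d_a$, $k=|\mathcal{T}_a|$), nonnegativity, and so forms a convex set. Total link flow $F_{ij}=\sum_{(a,k)}L_{(a,k)}f_{ij}(a,k)$, workload $G_i=\sum_{(a,k)}w_i(a,k)g_i(a,k)$ with $w_i(a,k)>0$. $D_{ij}$, $C_i$ are increasing, continuously differentiable, convex. Total cost $T(\boldsymbol{\phi})=\sum_{(i,j)\in\mathcal{E}}D_{ij}(F_{ij})+\sum_{i\in\mathcal{V}}C_i(G_i)$. $\mathcal{D}_{\boldsymbol{\phi}}(\boldsymbol{r})$ is the set of $\boldsymbol{\phi}$ satisfying flow conservation with finite total cost. A function $h$ on a set $C\subset\mathbb{R}^n$ is geodesically convex with respect to a family of curves $\gamma_{x_1x_2}:[0,1]\to C$ joining $x_1$ to $x_2$ if $s\mapsto h(\gamma_{x_1x_2}(s))$ is convex for all $x_1,x_2\in C$. *)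

theory Defs
  imports "HOL-Analysis.Analysis"
begin

text \<open>A forwarding strategy / flow vector is a function
 i j a k, where j = None stands for the local processor (index 0 of the paper) and
 j = Some j' for the neighbour node j'.\<close>

record ('v, 'a) network =
  nodes   :: "'v set"
  links   :: "('v \<times> 'v) set"
  apps    :: "'a set"
  dest    :: "'a \<Rightarrow> 'v"
  ntasks  :: "'a \<Rightarrow> nat"
  rate    :: "'v \<Rightarrow> 'a \<Rightarrow> real"
  pktsize :: "'a \<Rightarrow> nat \<Rightarrow> real"
  work    :: "'v \<Rightarrow> 'a \<Rightarrow> nat \<Rightarrow> real"

type_synonym ('v, 'a) strategy = "'v \<Rightarrow> 'v option \<Rightarrow> 'a \<Rightarrow> nat \<Rightarrow> real"
type_synonym ('v, 'a) traffic_vec = "'v \<Rightarrow> 'a \<Rightarrow> nat \<Rightarrow> real"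

definition well_formed_network :: "('v, 'a) network \<Rightarrow> bool" where
  "well_formed_network N \<longleftrightarrow>
     finite (nodes N) \<and> finite (apps N) \<and>
     links N \<subseteq> nodes N \<times> nodes N \<and>
     (\<forall>i j. (i, j) \<in> links N \<longrightarrow> (j, i) \<in> links N) \<and>
     (\<forall>i\<in>nodes N. \<forall>j\<in>nodes N. (i, j) \<in> (links N)\<^sup>*) \<and>
     (\<forall>a\<in>apps N. dest N a \<in> nodes N) \<and>
     (\<forall>i\<in>nodes N. \<forall>a\<in>apps N. rate N i a \<ge> 0) \<and>
     (\<forall>a\<in>apps N. \<forall>k\<le>ntasks N a. pktsize N a k > 0) \<and>
     (\<forall>i\<in>nodes N. \<forall>a\<in>apps N. \<forall>k\<le>ntasks N a. work N i a k > 0)"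

definition in_dom :: "('v, 'a) network \<Rightarrow> 'v \<Rightarrow> 'a \<Rightarrow> nat \<Rightarrow> bool" where
  "in_dom N i a k \<longleftrightarrow> i \<in> nodes N \<and> a \<in> apps N \<and> k \<le> ntasks N a"

definition in_targets :: "('v, 'a) network \<Rightarrow> 'v option \<Rightarrow> bool" where
  "in_targets N j \<longleftrightarrow> (case j of None \<Rightarrow> True | Some j' \<Rightarrow> j' \<in> nodes N)"

definition flow_conservation :: "('v, 'a) network \<Rightarrow> ('v, 'a) strategy \<Rightarrow> bool" where
  "flow_conservation N phi \<longleftrightarrow>
     (\<forall>i j a k. \<not> (in_dom N i a k \<and> in_targets N j) \<longrightarrow> phi i j a k = 0) \<and>
     (\<forall>i j a k. in_dom N i a k \<and> in_targets N j \<longrightarrow> 0 \<le> phi i j a k \<and> phi i j a k \<le> 1) \<and>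
     (\<forall>i j a k. in_dom N i a k \<and> (i, j) \<notin> links N \<longrightarrow> phi i (Some j) a k = 0) \<and>
     (\<forall>i a. phi i None a (ntasks N a) = 0) \<and>
     (\<forall>i a k. in_dom N i a k \<longrightarrow>
        (\<Sum>j\<in>nodes N. phi i (Some j) a k) + phi i None a k =
        (if k = ntasks N a \<and> i = dest N a then 0 else 1))"

definition traffic_eqs :: "('v, 'a) network \<Rightarrow> ('v, 'a) strategy \<Rightarrow> ('v, 'a) traffic_vec \<Rightarrow> bool" where
  "traffic_eqs N phi t \<longleftrightarrow>
     (\<forall>i a k. in_dom N i a k \<longrightarrow>
        t i a k = (\<Sum>j\<in>nodes N. t j a k * phi j (Some i) a k) +
                  (if k = 0 then rate N i a else t i a (k - 1) * phi i None a (k - 1))) \<and>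
     (\<forall>i a k. \<not> in_dom N i a k \<longrightarrow> t i a k = 0)"

definition traffic :: "('v, 'a) network \<Rightarrow> ('v, 'a) strategy \<Rightarrow> ('v, 'a) traffic_vec" where
  "traffic N phi = (THE t. traffic_eqs N phi t)"

text \<open>D_phi(r): strategies satisfying flow conservation whose traffic is well defined
 (a unique finite solution of the traffic equations; then the total cost is finite since
 the cost functions are real-valued).\<close>
definition feasible :: "('v, 'a) network \<Rightarrow> ('v, 'a) strategy \<Rightarrow> bool" where
  "feasible N phi \<longleftrightarrow> flow_conservation N phi \<and> (\<exists>!t. traffic_eqs N phi t)"

definition pos_feasible :: "('v, 'a) network \<Rightarrow> ('v, 'a) strategy set" where
  "pos_feasible N = {phi. feasible N phi \<and>
      (\<forall>i a k. in_dom N i a k \<longrightarrow> traffic N phi i a k > 0)}"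

text \<open>Flow vector f(phi): f i (Some j) a k = f_ij(a,k), f i None a k = g_i(a,k).\<close>
definition flow_of :: "('v, 'a) network \<Rightarrow> ('v, 'a) strategy \<Rightarrow> ('v, 'a) strategy" where
  "flow_of N phi = (\<lambda>i j a k. traffic N phi i a k * phi i j a k)"

definition outflow :: "('v, 'a) network \<Rightarrow> ('v, 'a) strategy \<Rightarrow> 'v \<Rightarrow> 'a \<Rightarrow> nat \<Rightarrow> real" where
  "outflow N f i a k = (\<Sum>j\<in>nodes N. f i (Some j) a k) + f i None a k"

definition inflow :: "('v, 'a) network \<Rightarrow> ('v, 'a) strategy \<Rightarrow> 'v \<Rightarrow> 'a \<Rightarrow> nat \<Rightarrow> real" where
  "inflow N f i a k = (\<Sum>j\<in>nodes N. f j (Some i) a k) +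
     (if k = 0 then rate N i a else f i None a (k - 1))"

definition traffic_of_flow :: "('v, 'a) network \<Rightarrow> ('v, 'a) strategy \<Rightarrow> ('v, 'a) traffic_vec" where
  "traffic_of_flow N f i a k = outflow N f i a k +
     (if k = ntasks N a \<and> i = dest N a then inflow N f i a k else 0)"

definition phi_of :: "('v, 'a) network \<Rightarrow> ('v, 'a) strategy \<Rightarrow> ('v, 'a) strategy" where
  "phi_of N f = (\<lambda>i j a k. if in_dom N i a k \<and> in_targets N j
                           then f i j a k / traffic_of_flow N f i a k else 0)"

definition total_cost :: "('v, 'a) network \<Rightarrow> ('v \<Rightarrow> 'v \<Rightarrow> real \<Rightarrow> real) \<Rightarrow> ('v \<Rightarrow> real \<Rightarrow> real)
     \<Rightarrow> ('v, 'a) strategy \<Rightarrow> real" where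
  "total_cost N D C phi =
     (let f = flow_of N phi in
       (\<Sum>(i, j)\<in>links N. D i j (\<Sum>a\<in>apps N. \<Sum>k\<le>ntasks N a. pktsize N a k * f i (Some j) a k)) +
       (\<Sum>i\<in>nodes N. C i (\<Sum>a\<in>apps N. \<Sum>k\<le>ntasks N a. work N i a k * f i None a k)))"

definition gamma :: "('v, 'a) network \<Rightarrow> ('v, 'a) strategy \<Rightarrow> ('v, 'a) strategy \<Rightarrow> real
     \<Rightarrow> ('v, 'a) strategy" where
  "gamma N phi1 phi2 s =
     phi_of N (\<lambda>i j a k. (1 - s) * flow_of N phi1 i j a k + s * flow_of N phi2 i j a k)"

definition curve_family :: "'x set \<Rightarrow> ('x \<Rightarrow> 'x \<Rightarrow> real \<Rightarrow> 'x) \<Rightarrow> bool" where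
  "curve_family S gam \<longleftrightarrow>
     (\<forall>x1\<in>S. \<forall>x2\<in>S. gam x1 x2 0 = x1 \<and> gam x1 x2 1 = x2 \<and>
        (\<forall>s\<in>{0..1}. gam x1 x2 s \<in> S))"

definition geodesically_convex :: "'x set \<Rightarrow> ('x \<Rightarrow> 'x \<Rightarrow> real \<Rightarrow> 'x) \<Rightarrow> ('x \<Rightarrow> real) \<Rightarrow> bool" where
  "geodesically_convex S gam h \<longleftrightarrow>
     (\<forall>x1\<in>S. \<forall>x2\<in>S. convex_on {0..1} (\<lambda>s. h (gam x1 x2 s)))"

end

theory Submission
  imports Defs
begin

text \<open>Along the segment between the flow vectors \<open>f(\<phi>\<^sub>1)\<close> and \<open>f(\<phi>\<^sub>2)\<close> the traffic
  computed from the flow is the same convex combination of the two traffics, hence positive;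
  dividing the flow by it gives a strategy that satisfies flow conservation and whose traffic
  equations are solved by that combined traffic. The total cost is a sum of convex functions of
  loads that are linear in the flow, hence convex along the segment.

  The delicate point is that the combined traffic is the \<^emph>\<open>unique\<close> solution of the traffic
  equations. Two solutions agreeing on stage \<open>k - 1\<close> differ on stage \<open>k\<close> by a fixed point of
  the substochastic forwarding matrix, which lives on a closed set of nodes that stage-\<open>k\<close>
  traffic can enter but never leave (a trap). The curve's strategy uses every link and processor
  that \<open>\<phi>\<^sub>1\<close> (or \<open>\<phi>\<^sub>2\<close>) uses, so such a set is a trap for \<open>\<phi>\<^sub>1\<close> too; but the positive
  traffic of \<open>\<phi>\<^sub>1\<close> on a trap circulates there by itself, and removing it would leave a second
  solution of \<open>\<phi>\<^sub>1\<close>'s traffic equations.\<close>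

lemma convex_on_segment_comp:
  fixes g :: "real \<Rightarrow> real"
  assumes "convex_on UNIV g"
  shows "convex_on {0..1} (\<lambda>s. g ((1 - s) * x + s * y))"
proof (rule convex_onI)
  fix t u w :: real
  assume t: "0 < t" "t < 1"
  have "(1 - ((1 - t) *\<^sub>R u + t *\<^sub>R w)) * x + ((1 - t) *\<^sub>R u + t *\<^sub>R w) * y
     = (1 - t) *\<^sub>R ((1 - u) * x + u * y) + t *\<^sub>R ((1 - w) * x + w * y)"
    by (simp add: algebra_simps)
  then show "g ((1 - ((1 - t) *\<^sub>R u + t *\<^sub>R w)) * x + ((1 - t) *\<^sub>R u + t *\<^sub>R w) * y)
         \<le> (1 - t) * g ((1 - u) * x + u * y) + t * g ((1 - w) * x + w * y)"
    using convex_onD[OF assms, of t] t by simp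
qed (simp add: convex_real_interval)

lemma convex_on_sum_fun:
  assumes "finite A" "convex S" "\<And>x. x \<in> A \<Longrightarrow> convex_on S (f x)"
  shows "convex_on S (\<lambda>s. \<Sum>x\<in>A. f x s)"
  using assms(1,3)
proof (induction A rule: finite_induct)
  case empty then show ?case using assms(2) by (simp add: convex_on_const)
next
  case (insert a A) then show ?case by (simp add: convex_on_add)
qed

lemma convex_on_cong_on:
  assumes "convex_on S f" "\<And>x. x \<in> S \<Longrightarrow> g x = f x"
  shows "convex_on S g"
  using assms unfolding convex_on_def convex_def by auto

lemma substochastic_fixpoint_closed_class:
  fixes P :: "'v \<Rightarrow> 'v \<Rightarrow> real" and d :: "'v \<Rightarrow> real"
  assumes fin: "finite V"
    and nonneg: "\<And>i j. i \<in> V \<Longrightarrow> j \<in> V \<Longrightarrow> P j i \<ge> 0"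
    and rows: "\<And>j. j \<in> V \<Longrightarrow> (\<Sum>i\<in>V. P j i) \<le> 1"
    and fixpoint: "\<And>i. i \<in> V \<Longrightarrow> d i = (\<Sum>j\<in>V. d j * P j i)"
    and j0: "j0 \<in> V" "d j0 \<noteq> 0"
  shows "\<exists>C\<subseteq>V. j0 \<in> C \<and> (\<forall>j\<in>C. \<forall>i\<in>V. P j i \<noteq> 0 \<longrightarrow> i \<in> C)
           \<and> (\<forall>j\<in>C. (\<Sum>i\<in>V. P j i) = 1)"
proof -
  txt \<open>Comparing total mass: \<open>\<bar>d\<bar>\<close> is subinvariant, \<open>\<bar>d\<bar> \<le> \<bar>d\<bar> P\<close>, while \<open>\<bar>d\<bar> P\<close> has total
    mass at most that of \<open>\<bar>d\<bar>\<close>; so both defects \<open>g\<close> and \<open>h\<close> vanish, and the support of \<open>d\<close>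
    is the required class.\<close>
  define g where "g i = (\<Sum>j\<in>V. \<bar>d j\<bar> * P j i) - \<bar>d i\<bar>" for i
  define h where "h j = \<bar>d j\<bar> * (1 - (\<Sum>i\<in>V. P j i))" for j
  have g_nonneg: "g i \<ge> 0" if "i \<in> V" for i
  proof -
    have "\<bar>d i\<bar> = \<bar>\<Sum>j\<in>V. d j * P j i\<bar>" using fixpoint that by simp
    also have "\<dots> \<le> (\<Sum>j\<in>V. \<bar>d j\<bar> * P j i)"
      using sum_abs[of "\<lambda>j. d j * P j i" V] nonneg that by (simp add: abs_mult)
    finally show ?thesis unfolding g_def by simp
  qed
  have h_nonneg: "h j \<ge> 0" if "j \<in> V" for j
    unfolding h_def using rows[OF that] by simp
  have "(\<Sum>i\<in>V. \<Sum>j\<in>V. \<bar>d j\<bar> * P j i) = (\<Sum>j\<in>V. \<bar>d j\<bar> * (\<Sum>i\<in>V. P j i))"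
    by (subst sum.swap) (simp add: sum_distrib_left)
  then have "(\<Sum>i\<in>V. g i) + (\<Sum>j\<in>V. h j) = 0"
    unfolding g_def h_def by (simp add: sum_subtractf algebra_simps sum.distrib sum_distrib_left)
  moreover have "(\<Sum>i\<in>V. g i) \<ge> 0" "(\<Sum>i\<in>V. h i) \<ge> 0"
    using g_nonneg h_nonneg by (auto intro: sum_nonneg)
  ultimately have g0: "\<forall>i\<in>V. g i = 0" and h0: "\<forall>i\<in>V. h i = 0"
    using sum_nonneg_eq_0_iff[OF fin, of g] sum_nonneg_eq_0_iff[OF fin, of h] g_nonneg h_nonneg
    by auto
  define C where "C = {j\<in>V. d j \<noteq> 0}"
  have "i \<in> C" if j: "j \<in> C" and i: "i \<in> V" and "P j i \<noteq> 0" for j i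
  proof -
    have "0 < \<bar>d j\<bar> * P j i"
      using nonneg[OF i] j \<open>P j i \<noteq> 0\<close> unfolding C_def by (simp add: order_le_neq_trans)
    also have "\<dots> \<le> (\<Sum>l\<in>V. \<bar>d l\<bar> * P l i)"
      by (rule member_le_sum) (use j nonneg i C_def fin in auto)
    also have "\<dots> = \<bar>d i\<bar>" using g0 i unfolding g_def by simp
    finally show "i \<in> C" using i unfolding C_def by auto
  qed
  moreover have "(\<Sum>i\<in>V. P j i) = 1" if "j \<in> C" for j
    using h0 that unfolding C_def h_def by auto
  ultimately show ?thesis using j0 unfolding C_def by blast
qed

lemma closed_stochastic_class_balance:
  fixes Q :: "'v \<Rightarrow> 'v \<Rightarrow> real" and t b :: "'v \<Rightarrow> real"
  assumes fin: "finite V"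
    and Q_nonneg: "\<And>i j. i \<in> V \<Longrightarrow> j \<in> V \<Longrightarrow> Q j i \<ge> 0"
    and t_nonneg: "\<And>i. i \<in> V \<Longrightarrow> t i \<ge> 0"
    and b_nonneg: "\<And>i. i \<in> V \<Longrightarrow> b i \<ge> 0"
    and balance: "\<And>i. i \<in> V \<Longrightarrow> t i = (\<Sum>j\<in>V. t j * Q j i) + b i"
    and CV: "C \<subseteq> V"
    and closed: "\<And>j i. j \<in> C \<Longrightarrow> i \<in> V - C \<Longrightarrow> Q j i = 0"
    and stochastic: "\<And>j. j \<in> C \<Longrightarrow> (\<Sum>i\<in>C. Q j i) = 1"
    and i: "i \<in> C"
  shows "t i = (\<Sum>j\<in>C. t j * Q j i)"
proof -
  txt \<open>\<open>x\<close> is what enters \<open>C\<close> from outside or exogenously; mass conservation on \<open>C\<close> forces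
    it to vanish.\<close>
  define x where "x i = (\<Sum>j\<in>V - C. t j * Q j i) + b i" for i
  have finC: "finite C" using fin CV finite_subset by auto
  have t_eq: "t i = (\<Sum>j\<in>C. t j * Q j i) + x i" if "i \<in> C" for i
    using balance[of i] that CV sum.subset_diff[OF CV fin, of "\<lambda>j. t j * Q j i"]
    unfolding x_def by auto
  have x_nonneg: "x i \<ge> 0" if "i \<in> C" for i
    unfolding x_def using that CV Q_nonneg t_nonneg b_nonneg
    by (intro add_nonneg_nonneg sum_nonneg mult_nonneg_nonneg) auto
  have "(\<Sum>i\<in>C. t i) = (\<Sum>i\<in>C. \<Sum>j\<in>C. t j * Q j i) + (\<Sum>i\<in>C. x i)"
    using t_eq by (simp add: sum.distrib)
  also have "(\<Sum>i\<in>C. \<Sum>j\<in>C. t j * Q j i) = (\<Sum>j\<in>C. t j * (\<Sum>i\<in>C. Q j i))"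
    by (subst sum.swap) (simp add: sum_distrib_left)
  also have "\<dots> = (\<Sum>j\<in>C. t j)" using stochastic by simp
  finally have "(\<Sum>i\<in>C. x i) = 0" by simp
  then have "x i = 0" using sum_nonneg_eq_0_iff[OF finC, of x] x_nonneg i by auto
  then show ?thesis using t_eq[OF i] by simp
qed

lemma in_targets_simps [simp]: "in_targets N None" "in_targets N (Some j) \<longleftrightarrow> j \<in> nodes N"
  by (auto simp: in_targets_def)

lemma well_formed_networkD:
  assumes "well_formed_network N"
  shows "finite (nodes N)" "links N \<subseteq> nodes N \<times> nodes N"
    and "\<And>i a. i \<in> nodes N \<Longrightarrow> a \<in> apps N \<Longrightarrow> rate N i a \<ge> 0"
  using assms unfolding well_formed_network_def by blast+

lemma flow_conservationD:
  assumes "flow_conservation N phi"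
  shows flow_conservation_outside: "\<not> (in_dom N i a k \<and> in_targets N j) \<Longrightarrow> phi i j a k = 0"
    and flow_conservation_range: "in_dom N i a k \<Longrightarrow> in_targets N j \<Longrightarrow> 0 \<le> phi i j a k \<and> phi i j a k \<le> 1"
    and flow_conservation_link: "in_dom N i a k \<Longrightarrow> (i, l) \<notin> links N \<Longrightarrow> phi i (Some l) a k = 0"
    and flow_conservation_last: "phi i None a (ntasks N a) = 0"
    and flow_conservation_sum: "in_dom N i a k \<Longrightarrow>
      (\<Sum>j\<in>nodes N. phi i (Some j) a k) + phi i None a k = (if k = ntasks N a \<and> i = dest N a then 0 else 1)"
  using assms unfolding flow_conservation_def by blast+

lemma traffic_eqsD:
  assumes "traffic_eqs N phi t"
  shows traffic_eqs_balance: "in_dom N i a k \<Longrightarrow>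
      t i a k = (\<Sum>j\<in>nodes N. t j a k * phi j (Some i) a k) +
                (if k = 0 then rate N i a else t i a (k - 1) * phi i None a (k - 1))"
    and traffic_eqs_outside: "\<not> in_dom N i a k \<Longrightarrow> t i a k = 0"
  using assms unfolding traffic_eqs_def by blast+

lemma feasible_traffic_eqs: "feasible N phi \<Longrightarrow> traffic_eqs N phi (traffic N phi)"
  unfolding feasible_def traffic_def by (metis theI')

lemma feasible_traffic_unique: "feasible N phi \<Longrightarrow> traffic_eqs N phi t \<Longrightarrow> traffic N phi = t"
  unfolding feasible_def traffic_def by (metis the1_equality)

lemma pos_feasibleD:
  assumes "phi \<in> pos_feasible N"
  shows "feasible N phi" "flow_conservation N phi" "traffic_eqs N phi (traffic N phi)"
    and "in_dom N i a k \<Longrightarrow> traffic N phi i a k > 0"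
  using assms feasible_traffic_eqs[of N phi] by (auto simp: pos_feasible_def feasible_def)

definition trap :: "('v, 'a) network \<Rightarrow> ('v, 'a) strategy \<Rightarrow> 'a \<Rightarrow> nat \<Rightarrow> 'v set \<Rightarrow> bool" where
  "trap N phi a k C \<longleftrightarrow> C \<noteq> {} \<and> C \<subseteq> nodes N \<and> a \<in> apps N \<and> k \<le> ntasks N a \<and>
     (\<forall>j\<in>C. \<not> (k = ntasks N a \<and> j = dest N a) \<and> phi j None a k = 0 \<and>
        (\<forall>i\<in>nodes N - C. phi j (Some i) a k = 0))"

lemma trap_row_sum:
  assumes fin: "finite (nodes N)" and fc: "flow_conservation N phi"
    and trap: "trap N phi a k C" and j: "j \<in> C"
  shows "(\<Sum>i\<in>C. phi j (Some i) a k) = 1"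
proof -
  have C: "C \<subseteq> nodes N" and dom: "in_dom N j a k"
    using trap j unfolding trap_def in_dom_def by auto
  have "(\<Sum>i\<in>nodes N. phi j (Some i) a k) = 1"
    using flow_conservation_sum[OF fc dom] trap j unfolding trap_def by auto
  moreover have "(\<Sum>i\<in>nodes N. phi j (Some i) a k) = (\<Sum>i\<in>C. phi j (Some i) a k)"
    using trap j C fin unfolding trap_def by (intro sum.mono_neutral_right) auto
  ultimately show ?thesis by simp
qed

lemma trap_support_mono:
  assumes "\<And>i j a k. in_dom N i a k \<Longrightarrow> in_targets N j \<Longrightarrow> q i j a k = 0 \<Longrightarrow> p i j a k = 0"
    and "trap N q a k C"
  shows "trap N p a k C"
  using assms unfolding trap_def in_dom_def by (auto simp: subset_iff)

lemma traffic_eqs_diff_homogeneous: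
  assumes T: "traffic_eqs N p T"
    and homogeneous: "\<And>i a k. in_dom N i a k \<Longrightarrow>
      e i a k = (\<Sum>j\<in>nodes N. e j a k * p j (Some i) a k) +
                (if k = 0 then 0 else e i a (k - 1) * p i None a (k - 1))"
    and outside: "\<And>i a k. \<not> in_dom N i a k \<Longrightarrow> e i a k = 0"
  shows "traffic_eqs N p (\<lambda>i a k. T i a k - e i a k)"
  unfolding traffic_eqs_def
proof (intro conjI allI impI)
  fix i a k assume dom: "in_dom N i a k"
  show "T i a k - e i a k = (\<Sum>j\<in>nodes N. (T j a k - e j a k) * p j (Some i) a k) +
      (if k = 0 then rate N i a else (T i a (k - 1) - e i a (k - 1)) * p i None a (k - 1))"
    using traffic_eqs_balance[OF T dom] homogeneous[OF dom]
    by (simp add: sum_subtractf left_diff_distrib)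
next
  fix i a k assume "\<not> in_dom N i a k"
  then show "T i a k - e i a k = 0" using traffic_eqs_outside[OF T] outside by simp
qed

lemma pos_feasible_trap_circulation:
  assumes wf: "well_formed_network N" and p: "p \<in> pos_feasible N"
    and trap: "trap N p a k C" and i: "i \<in> C"
  shows "traffic N p i a k = (\<Sum>j\<in>C. traffic N p j a k * p j (Some i) a k)"
proof -
  note P = pos_feasibleD[OF p]
  have a: "a \<in> apps N" and k: "k \<le> ntasks N a" and C: "C \<subseteq> nodes N"
    using trap unfolding trap_def by auto
  have dom: "in_dom N l a k" "0 < k \<Longrightarrow> in_dom N l a (k - 1)" if "l \<in> nodes N" for l
    using that a k by (auto simp: in_dom_def)
  show ?thesis
  proof (rule closed_stochastic_class_balance[OF well_formed_networkD(1)[OF wf] _ _ _ _ C _ _ i])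
    fix l assume l: "l \<in> nodes N"
    show "0 \<le> traffic N p l a k" using P(4)[OF dom(1)[OF l]] by simp
    show "0 \<le> (if k = 0 then rate N l a else traffic N p l a (k - 1) * p l None a (k - 1))"
      using well_formed_networkD(3)[OF wf l a] P(4)[OF dom(2)[OF l]]
        flow_conservation_range[OF P(2) dom(2)[OF l], of None]
      by auto
    show "traffic N p l a k = (\<Sum>j\<in>nodes N. traffic N p j a k * p j (Some l) a k) +
        (if k = 0 then rate N l a else traffic N p l a (k - 1) * p l None a (k - 1))"
      using traffic_eqs_balance[OF P(3) dom(1)[OF l]] .
  next
    fix j l assume "l \<in> nodes N" "j \<in> nodes N"
    then show "0 \<le> p j (Some l) a k" using flow_conservation_range[OF P(2) dom(1)] by simp
  qed (use trap trap_row_sum[OF well_formed_networkD(1)[OF wf] P(2) trap] in \<open>auto simp: trap_def\<close>)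
qed

lemma trap_restriction_homogeneous:
  assumes fin: "finite (nodes N)" and trap: "trap N p a k C"
    and circulation: "\<And>l. l \<in> C \<Longrightarrow> T l a k = (\<Sum>j\<in>C. T j a k * p j (Some l) a k)"
    and i: "i \<in> nodes N"
  defines "e \<equiv> \<lambda>i a' k'. if a' = a \<and> k' = k \<and> i \<in> C then T i a k else 0"
  shows "e i a' k' = (\<Sum>j\<in>nodes N. e j a' k' * p j (Some i) a' k') +
      (if k' = 0 then 0 else e i a' (k' - 1) * p i None a' (k' - 1))"
proof -
  have C: "C \<subseteq> nodes N" using trap unfolding trap_def by blast
  have "(\<Sum>j\<in>nodes N. e j a k * p j (Some i) a k)
      = (\<Sum>j\<in>nodes N. if j \<in> C then T j a k * p j (Some i) a k else 0)"
    by (rule sum.cong) (auto simp: e_def)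
  also have "\<dots> = (\<Sum>j\<in>nodes N \<inter> C. T j a k * p j (Some i) a k)"
    by (simp add: sum.inter_restrict fin)
  also have "\<dots> = e i a k"
    using circulation trap i C unfolding e_def trap_def
    by (auto simp: Int_absorb1 intro!: sum.neutral)
  finally have stage: "e i a k = (\<Sum>j\<in>nodes N. e j a k * p j (Some i) a k)" ..
  have no_processing: "e i a k * p i None a k = 0"
    using trap unfolding e_def trap_def by auto
  consider "a' = a" "k' = k" | "a' = a" "k' = Suc k" | "a' \<noteq> a \<or> (k' \<noteq> k \<and> k' \<noteq> Suc k)"
    by blast
  then show ?thesis
  proof cases
    case 1
    have "(if k = 0 then 0 else e i a (k - 1) * p i None a (k - 1)) = 0"
      by (cases k) (simp_all add: e_def)
    then show ?thesis using stage unfolding 1 by linarith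
  next
    case 2 then show ?thesis using no_processing by (simp add: e_def)
  next
    case 3 then show ?thesis by (auto simp: e_def)
  qed
qed

lemma pos_feasible_no_trap:
  assumes wf: "well_formed_network N" and p: "p \<in> pos_feasible N"
  shows "\<not> trap N p a k C"
proof
  assume trap: "trap N p a k C"
  note P = pos_feasibleD[OF p]
  have C: "C \<subseteq> nodes N" "C \<noteq> {}" and a: "a \<in> apps N" and k: "k \<le> ntasks N a"
    using trap unfolding trap_def by auto
  define T where "T = traffic N p"
  define e where "e i a' k' = (if a' = a \<and> k' = k \<and> i \<in> C then T i a k else 0)" for i a' k'
  have "traffic_eqs N p (\<lambda>i a k. T i a k - e i a k)"
  proof (rule traffic_eqs_diff_homogeneous)
    show "traffic_eqs N p T" using P(3) unfolding T_def .
    fix i a' k' assume "in_dom N i a' k'"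
    then show "e i a' k' = (\<Sum>j\<in>nodes N. e j a' k' * p j (Some i) a' k') +
        (if k' = 0 then 0 else e i a' (k' - 1) * p i None a' (k' - 1))"
      using trap_restriction_homogeneous[where T = "traffic N p", OF well_formed_networkD(1)[OF wf]
          trap pos_feasible_trap_circulation[OF wf p trap]]
      unfolding e_def T_def in_dom_def by blast
  next
    fix i a' k' assume "\<not> in_dom N i a' k'"
    then show "e i a' k' = 0" using C a k by (auto simp: e_def in_dom_def)
  qed
  then have "T = (\<lambda>i a k. T i a k - e i a k)"
    using feasible_traffic_unique[OF P(1)] unfolding T_def by blast
  then have no_e: "e j a k = 0" for j
    by (simp add: fun_eq_iff)
  obtain j where j: "j \<in> C" using C by blast
  then have "T j a k > 0"
    using P(4) C a k unfolding T_def in_dom_def by auto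
  then show False using no_e[of j] j by (simp add: e_def)
qed

lemma traffic_eqs_stage_unique:
  assumes wf: "well_formed_network N" and fc: "flow_conservation N q"
    and no_trap: "\<And>C. \<not> trap N q a k C"
    and t: "traffic_eqs N q t" and t': "traffic_eqs N q t'"
    and a: "a \<in> apps N" and k: "k \<le> ntasks N a"
    and previous: "0 < k \<Longrightarrow> \<forall>i. t i a (k - 1) = t' i a (k - 1)"
  shows "t i a k = t' i a k"
proof (rule ccontr)
  let ?V = "nodes N"
  have dom: "in_dom N l a k" if "l \<in> ?V" for l using that a k by (simp add: in_dom_def)
  define d where "d l = t l a k - t' l a k" for l
  define P where "P j l = q j (Some l) a k" for j l
  assume "t i a k \<noteq> t' i a k"
  then have i: "i \<in> ?V" "d i \<noteq> 0"
    using traffic_eqs_outside[OF t, of i a k] traffic_eqs_outside[OF t', of i a k]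
    unfolding d_def in_dom_def by force+
  have "d l = (\<Sum>j\<in>?V. d j * P j l)" if "l \<in> ?V" for l
    using traffic_eqs_balance[OF t dom[OF that]] traffic_eqs_balance[OF t' dom[OF that]] previous
    by (cases "k = 0") (simp_all add: d_def P_def sum_subtractf left_diff_distrib)
  moreover have "P j l \<ge> 0" if "l \<in> ?V" "j \<in> ?V" for j l
    using flow_conservation_range[OF fc dom[OF that(2)], of "Some l"] that unfolding P_def by simp
  moreover have rows: "(\<Sum>l\<in>?V. P j l) \<le> 1" if "j \<in> ?V" for j
    using flow_conservation_sum[OF fc dom[OF that]] flow_conservation_range[OF fc dom[OF that], of None]
    unfolding P_def by (auto split: if_splits)
  ultimately obtain C where C: "C \<subseteq> ?V" "i \<in> C"
      "\<forall>j\<in>C. \<forall>l\<in>?V. P j l \<noteq> 0 \<longrightarrow> l \<in> C" "\<forall>j\<in>C. (\<Sum>l\<in>?V. P j l) = 1"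
    using substochastic_fixpoint_closed_class[OF well_formed_networkD(1)[OF wf], of P d i] i
    by blast
  have "\<not> (k = ntasks N a \<and> j = dest N a) \<and> q j None a k = 0" if j: "j \<in> C" for j
  proof -
    have "j \<in> ?V" "(\<Sum>l\<in>?V. q j (Some l) a k) = 1" using C j unfolding P_def by auto
    then show ?thesis
      using flow_conservation_sum[OF fc dom, of j] flow_conservation_range[OF fc dom, of j None]
      by (auto split: if_splits)
  qed
  moreover have "q j (Some l) a k = 0" if "j \<in> C" "l \<in> ?V - C" for j l
    using C(3) that unfolding P_def by blast
  ultimately have "trap N q a k C"
    using C(1,2) a k unfolding trap_def by blast
  then show False using no_trap by blast
qed

lemma traffic_eqs_unique_without_trap:
  assumes wf: "well_formed_network N" and fc: "flow_conservation N q"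
    and no_trap: "\<And>a k C. \<not> trap N q a k C"
    and t: "traffic_eqs N q t" and t': "traffic_eqs N q t'"
  shows "t = t'"
proof (intro ext)
  fix i a k
  show "t i a k = t' i a k"
  proof (cases "a \<in> apps N \<and> k \<le> ntasks N a")
    case False
    then show ?thesis using traffic_eqs_outside[OF t] traffic_eqs_outside[OF t'] by (auto simp: in_dom_def)
  next
    case True
    then have a: "a \<in> apps N" by blast
    have "k \<le> ntasks N a \<Longrightarrow> \<forall>i. t i a k = t' i a k" for k
    proof (induction k)
      case 0
      show ?case by (intro allI traffic_eqs_stage_unique[OF wf fc no_trap t t' a 0]) simp
    next
      case (Suc k)
      show ?case
        by (intro allI traffic_eqs_stage_unique[OF wf fc no_trap t t' a Suc.prems])
          (use Suc in simp)
    qed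
    then show ?thesis using True by blast
  qed
qed

definition flow_comb :: "real \<Rightarrow> ('v, 'a) strategy \<Rightarrow> ('v, 'a) strategy \<Rightarrow> ('v, 'a) strategy" where
  "flow_comb s f1 f2 = (\<lambda>i j a k. (1 - s) * f1 i j a k + s * f2 i j a k)"

lemma gamma_eq_phi_of_flow_comb: "gamma N p1 p2 s = phi_of N (flow_comb s (flow_of N p1) (flow_of N p2))"
  by (simp add: gamma_def flow_comb_def)

lemma gamma_outside: "\<not> (in_dom N i a k \<and> in_targets N j) \<Longrightarrow> gamma N p1 p2 s i j a k = 0"
  unfolding gamma_eq_phi_of_flow_comb phi_of_def by auto

lemma sum_convex_comb:
  "(\<Sum>j\<in>A. (1 - s) * x j + s * (y j :: real)) = (1 - s) * (\<Sum>j\<in>A. x j) + s * (\<Sum>j\<in>A. y j)"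
  by (simp add: sum.distrib sum_distrib_left)

lemma outflow_flow_comb:
  "outflow N (flow_comb s f1 f2) i a k = (1 - s) * outflow N f1 i a k + s * outflow N f2 i a k"
  unfolding outflow_def flow_comb_def sum_convex_comb by (simp add: algebra_simps)

lemma inflow_flow_comb:
  "inflow N (flow_comb s f1 f2) i a k = (1 - s) * inflow N f1 i a k + s * inflow N f2 i a k"
  unfolding inflow_def flow_comb_def sum_convex_comb by (cases "k = 0") (simp_all add: algebra_simps)

lemma traffic_of_flow_flow_comb:
  "traffic_of_flow N (flow_comb s f1 f2) i a k
     = (1 - s) * traffic_of_flow N f1 i a k + s * traffic_of_flow N f2 i a k"
  by (simp add: traffic_of_flow_def outflow_flow_comb inflow_flow_comb algebra_simps)

lemma outflow_flow_of:
  assumes "feasible N phi" "in_dom N i a k"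
  shows "outflow N (flow_of N phi) i a k
    = (if k = ntasks N a \<and> i = dest N a then 0 else traffic N phi i a k)"
proof -
  have "outflow N (flow_of N phi) i a k
      = traffic N phi i a k * ((\<Sum>j\<in>nodes N. phi i (Some j) a k) + phi i None a k)"
    by (simp add: outflow_def flow_of_def sum_distrib_left distrib_left)
  then show ?thesis
    using assms flow_conservation_sum[of N phi i a k] by (simp add: feasible_def)
qed

lemma inflow_flow_of:
  assumes "feasible N phi" "in_dom N i a k"
  shows "inflow N (flow_of N phi) i a k = traffic N phi i a k"
  using traffic_eqs_balance[OF feasible_traffic_eqs[OF assms(1)] assms(2)]
  by (simp add: inflow_def flow_of_def)

lemma traffic_of_flow_flow_of:
  assumes "feasible N phi" "in_dom N i a k"
  shows "traffic_of_flow N (flow_of N phi) i a k = traffic N phi i a k"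
  using outflow_flow_of[OF assms] inflow_flow_of[OF assms]
  by (cases "k = ntasks N a \<and> i = dest N a") (auto simp: traffic_of_flow_def)

lemma phi_of_flow_of:
  assumes "phi \<in> pos_feasible N"
  shows "phi_of N (flow_of N phi) = phi"
proof (intro ext)
  fix i j a k
  note P = pos_feasibleD[OF assms]
  show "phi_of N (flow_of N phi) i j a k = phi i j a k"
  proof (cases "in_dom N i a k \<and> in_targets N j")
    case True
    then show ?thesis
      using P(4)[of i a k] traffic_of_flow_flow_of[OF P(1), of i a k]
      by (simp add: phi_of_def flow_of_def)
  next
    case False
    then show ?thesis using flow_conservation_outside[OF P(2) False] by (auto simp: phi_of_def)
  qed
qed

lemma flow_of_nonneg:
  assumes "phi \<in> pos_feasible N" "in_dom N i a k" "in_targets N j"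
  shows "0 \<le> flow_of N phi i j a k"
  using pos_feasibleD(4)[OF assms(1,2)] flow_conservation_range[OF pos_feasibleD(2)[OF assms(1)] assms(2,3)]
  by (simp add: flow_of_def)

lemma flow_of_eq_0_imp:
  "phi \<in> pos_feasible N \<Longrightarrow> in_dom N i a k \<Longrightarrow> flow_of N phi i j a k = 0 \<Longrightarrow> phi i j a k = 0"
  using pos_feasibleD(4)[of phi N i a k] by (simp add: flow_of_def)

context
  fixes N :: "('v, 'a) network" and p1 p2 :: "('v, 'a) strategy" and s :: real
  assumes wf: "well_formed_network N"
    and p1: "p1 \<in> pos_feasible N" and p2: "p2 \<in> pos_feasible N"
    and s: "0 \<le> s" "s \<le> 1"
begin

abbreviation curve_flow :: "('v, 'a) strategy" where
  "curve_flow \<equiv> flow_comb s (flow_of N p1) (flow_of N p2)"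

abbreviation curve_traffic :: "('v, 'a) traffic_vec" where
  "curve_traffic \<equiv> \<lambda>i a k. (1 - s) * traffic N p1 i a k + s * traffic N p2 i a k"

lemma curve_flow_nonneg: "in_dom N i a k \<Longrightarrow> in_targets N j \<Longrightarrow> 0 \<le> curve_flow i j a k"
  using flow_of_nonneg[OF p1] flow_of_nonneg[OF p2] s by (simp add: flow_comb_def)

lemma curve_traffic_pos:
  assumes "in_dom N i a k"
  shows "0 < curve_traffic i a k"
proof (cases "s = 1")
  case False
  then have "0 < (1 - s) * traffic N p1 i a k" using s pos_feasibleD(4)[OF p1 assms] by simp
  moreover have "0 \<le> s * traffic N p2 i a k" using s pos_feasibleD(4)[OF p2 assms] by simp
  ultimately show ?thesis by linarith
qed (use pos_feasibleD(4)[OF p2 assms] in simp)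

lemma gamma_inside:
  assumes "in_dom N i a k" "in_targets N j"
  shows "gamma N p1 p2 s i j a k = curve_flow i j a k / curve_traffic i a k"
  using assms traffic_of_flow_flow_of[OF pos_feasibleD(1)[OF p1] assms(1)]
    traffic_of_flow_flow_of[OF pos_feasibleD(1)[OF p2] assms(1)]
  by (simp add: gamma_eq_phi_of_flow_comb phi_of_def traffic_of_flow_flow_comb)

lemma outflow_curve_flow:
  "in_dom N i a k \<Longrightarrow>
    outflow N curve_flow i a k = (if k = ntasks N a \<and> i = dest N a then 0 else curve_traffic i a k)"
  using outflow_flow_of[OF pos_feasibleD(1)[OF p1]] outflow_flow_of[OF pos_feasibleD(1)[OF p2]]
  by (simp add: outflow_flow_comb)

lemma curve_flow_le_outflow:
  assumes dom: "in_dom N i a k" and j: "in_targets N j"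
  shows "curve_flow i j a k \<le> outflow N curve_flow i a k"
proof (cases j)
  case None
  have "0 \<le> (\<Sum>l\<in>nodes N. curve_flow i (Some l) a k)"
    using curve_flow_nonneg[OF dom] by (intro sum_nonneg) simp
  then show ?thesis using None by (simp add: outflow_def)
next
  case (Some l)
  have "curve_flow i (Some l) a k \<le> (\<Sum>l\<in>nodes N. curve_flow i (Some l) a k)"
    using j Some curve_flow_nonneg[OF dom] well_formed_networkD(1)[OF wf]
    by (intro member_le_sum) auto
  then show ?thesis using Some curve_flow_nonneg[OF dom, of None] by (simp add: outflow_def)
qed

lemma flow_conservation_gamma: "flow_conservation N (gamma N p1 p2 s)"
  unfolding flow_conservation_def
proof (intro conjI allI impI)
  fix i j a k
  assume "\<not> (in_dom N i a k \<and> in_targets N j)"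
  then show "gamma N p1 p2 s i j a k = 0" by (rule gamma_outside)
next
  fix i j a k
  assume ij: "in_dom N i a k \<and> in_targets N j"
  then have "curve_flow i j a k \<le> curve_traffic i a k"
    using curve_flow_le_outflow[of i a k j] outflow_curve_flow[of i a k] curve_traffic_pos[of i a k]
    by (auto split: if_splits)
  then show "0 \<le> gamma N p1 p2 s i j a k" "gamma N p1 p2 s i j a k \<le> 1"
    using ij gamma_inside curve_flow_nonneg curve_traffic_pos[of i a k] by auto
next
  fix i j a k
  assume "in_dom N i a k \<and> (i, j) \<notin> links N"
  then show "gamma N p1 p2 s i (Some j) a k = 0"
    using flow_conservation_link[OF pos_feasibleD(2)[OF p1]] flow_conservation_link[OF pos_feasibleD(2)[OF p2]]
    by (simp add: gamma_eq_phi_of_flow_comb phi_of_def flow_comb_def flow_of_def)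
next
  fix i a
  show "gamma N p1 p2 s i None a (ntasks N a) = 0"
    using flow_conservation_last[OF pos_feasibleD(2)[OF p1]] flow_conservation_last[OF pos_feasibleD(2)[OF p2]]
    by (simp add: gamma_eq_phi_of_flow_comb phi_of_def flow_comb_def flow_of_def)
next
  fix i a k
  assume dom: "in_dom N i a k"
  have "(\<Sum>j\<in>nodes N. gamma N p1 p2 s i (Some j) a k) + gamma N p1 p2 s i None a k
      = outflow N curve_flow i a k / curve_traffic i a k"
    using gamma_inside[OF dom]
    by (simp add: outflow_def sum_divide_distrib add_divide_distrib)
  then show "(\<Sum>j\<in>nodes N. gamma N p1 p2 s i (Some j) a k) + gamma N p1 p2 s i None a k
      = (if k = ntasks N a \<and> i = dest N a then 0 else 1)"
    using outflow_curve_flow[OF dom] curve_traffic_pos[OF dom] by simp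
qed

lemma traffic_eqs_gamma: "traffic_eqs N (gamma N p1 p2 s) curve_traffic"
  unfolding traffic_eqs_def
proof (intro conjI allI impI)
  fix i a k
  assume dom: "in_dom N i a k"
  have dom_at: "in_dom N l a k'" if "l \<in> nodes N" "k' \<le> k" for l k'
    using dom that by (auto simp: in_dom_def)
  have "curve_traffic l a k' * gamma N p1 p2 s l j a k' = curve_flow l j a k'"
    if "l \<in> nodes N" "k' \<le> k" "in_targets N j" for l j k'
    using gamma_inside[OF dom_at[OF that(1,2)] that(3)] curve_traffic_pos[OF dom_at[OF that(1,2)]]
    by simp
  then have "(\<Sum>j\<in>nodes N. curve_traffic j a k * gamma N p1 p2 s j (Some i) a k)
      = (\<Sum>j\<in>nodes N. curve_flow j (Some i) a k)"
    and "0 < k \<Longrightarrow>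
      curve_traffic i a (k - 1) * gamma N p1 p2 s i None a (k - 1) = curve_flow i None a (k - 1)"
    using dom by (auto simp: in_dom_def)
  then have "(\<Sum>j\<in>nodes N. curve_traffic j a k * gamma N p1 p2 s j (Some i) a k) +
      (if k = 0 then rate N i a else curve_traffic i a (k - 1) * gamma N p1 p2 s i None a (k - 1))
      = inflow N curve_flow i a k"
    by (simp add: inflow_def)
  also have "\<dots> = curve_traffic i a k"
    using inflow_flow_of[OF pos_feasibleD(1)[OF p1] dom] inflow_flow_of[OF pos_feasibleD(1)[OF p2] dom]
    by (simp add: inflow_flow_comb)
  finally show "curve_traffic i a k = (\<Sum>j\<in>nodes N. curve_traffic j a k * gamma N p1 p2 s j (Some i) a k) +
      (if k = 0 then rate N i a else curve_traffic i a (k - 1) * gamma N p1 p2 s i None a (k - 1))"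
    by simp
next
  fix i a k
  assume "\<not> in_dom N i a k"
  then show "curve_traffic i a k = 0"
    using traffic_eqs_outside[OF pos_feasibleD(3)[OF p1]] traffic_eqs_outside[OF pos_feasibleD(3)[OF p2]]
    by simp
qed

text \<open>For \<open>s < 1\<close> the curve routes wherever \<open>\<phi>\<^sub>1\<close> does, for \<open>s = 1\<close> wherever \<open>\<phi>\<^sub>2\<close> does.\<close>
lemma gamma_no_trap: "\<not> trap N (gamma N p1 p2 s) a k C"
proof
  assume trap: "trap N (gamma N p1 p2 s) a k C"
  define p where "p = (if s = 1 then p2 else p1)"
  have "p \<in> pos_feasible N" using p1 p2 by (simp add: p_def)
  moreover have "p i j a k = 0"
    if dom: "in_dom N i a k" and j: "in_targets N j" and "gamma N p1 p2 s i j a k = 0" for i j a k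
  proof -
    have "(1 - s) * flow_of N p1 i j a k + s * flow_of N p2 i j a k = 0"
      using that gamma_inside[OF dom j] curve_traffic_pos[OF dom] by (simp add: flow_comb_def)
    moreover have "0 \<le> (1 - s) * flow_of N p1 i j a k" "0 \<le> s * flow_of N p2 i j a k"
      using flow_of_nonneg[OF p1 dom j] flow_of_nonneg[OF p2 dom j] s by simp_all
    ultimately have "(1 - s) * flow_of N p1 i j a k = 0" "s * flow_of N p2 i j a k = 0"
      by linarith+
    then show ?thesis
      using flow_of_eq_0_imp[OF p1 dom] flow_of_eq_0_imp[OF p2 dom] unfolding p_def by auto
  qed
  ultimately show False
    using trap_support_mono[OF _ trap] pos_feasible_no_trap[OF wf] by blast
qed

lemma
  shows gamma_pos_feasible: "gamma N p1 p2 s \<in> pos_feasible N"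
    and traffic_gamma: "traffic N (gamma N p1 p2 s) = curve_traffic"
proof -
  have feasible: "feasible N (gamma N p1 p2 s)"
    unfolding feasible_def
    using flow_conservation_gamma traffic_eqs_gamma
      traffic_eqs_unique_without_trap[OF wf flow_conservation_gamma gamma_no_trap]
    by blast
  then show traffic: "traffic N (gamma N p1 p2 s) = curve_traffic"
    using feasible_traffic_unique traffic_eqs_gamma by blast
  show "gamma N p1 p2 s \<in> pos_feasible N"
    using feasible curve_traffic_pos traffic unfolding pos_feasible_def by simp
qed

lemma flow_of_gamma: "flow_of N (gamma N p1 p2 s) = curve_flow"
proof (intro ext)
  fix i j a k
  show "flow_of N (gamma N p1 p2 s) i j a k = curve_flow i j a k"
  proof (cases "in_dom N i a k \<and> in_targets N j")
    case True
    then show ?thesis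
      using gamma_inside[of i a k j] curve_traffic_pos[of i a k]
      by (simp add: flow_of_def traffic_gamma)
  next
    case False
    then show ?thesis
      using gamma_outside[OF False] flow_conservation_outside[OF pos_feasibleD(2)[OF p1] False]
        flow_conservation_outside[OF pos_feasibleD(2)[OF p2] False]
      by (simp add: flow_of_def flow_comb_def)
  qed
qed

end

definition link_load :: "('v, 'a) network \<Rightarrow> ('v, 'a) strategy \<Rightarrow> 'v \<Rightarrow> 'v \<Rightarrow> real" where
  "link_load N f i j = (\<Sum>a\<in>apps N. \<Sum>k\<le>ntasks N a. pktsize N a k * f i (Some j) a k)"

definition node_load :: "('v, 'a) network \<Rightarrow> ('v, 'a) strategy \<Rightarrow> 'v \<Rightarrow> real" where
  "node_load N f i = (\<Sum>a\<in>apps N. \<Sum>k\<le>ntasks N a. work N i a k * f i None a k)"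

lemma total_cost_eq_loads:
  "total_cost N D C phi = (\<Sum>(i, j)\<in>links N. D i j (link_load N (flow_of N phi) i j)) +
     (\<Sum>i\<in>nodes N. C i (node_load N (flow_of N phi) i))"
  by (simp add: total_cost_def link_load_def node_load_def Let_def)

lemma link_load_flow_comb:
  "link_load N (flow_comb s f1 f2) i j = (1 - s) * link_load N f1 i j + s * link_load N f2 i j"
  by (simp add: link_load_def flow_comb_def distrib_left mult.left_commute sum.distrib sum_distrib_left)

lemma node_load_flow_comb:
  "node_load N (flow_comb s f1 f2) i = (1 - s) * node_load N f1 i + s * node_load N f2 i"
  by (simp add: node_load_def flow_comb_def distrib_left mult.left_commute sum.distrib sum_distrib_left)

lemma convex_on_total_cost_gamma:
  assumes wf: "well_formed_network N"
    and p1: "p1 \<in> pos_feasible N" and p2: "p2 \<in> pos_feasible N"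
    and D: "\<And>i j. (i, j) \<in> links N \<Longrightarrow> convex_on UNIV (D i j)"
    and C: "\<And>i. i \<in> nodes N \<Longrightarrow> convex_on UNIV (C i)"
  shows "convex_on {0..1} (\<lambda>s. total_cost N D C (gamma N p1 p2 s))"
proof (rule convex_on_cong_on)
  let ?X = "link_load N (flow_of N p1)" and ?Y = "link_load N (flow_of N p2)"
  let ?U = "node_load N (flow_of N p1)" and ?W = "node_load N (flow_of N p2)"
  have "finite (links N)"
    using well_formed_networkD(1,2)[OF wf] by (meson finite_SigmaI finite_subset)
  then show "convex_on {0..1} (\<lambda>s. (\<Sum>(i, j)\<in>links N. D i j ((1 - s) * ?X i j + s * ?Y i j)) +
      (\<Sum>i\<in>nodes N. C i ((1 - s) * ?U i + s * ?W i)))"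
    using well_formed_networkD(1)[OF wf] D C
    by (intro convex_on_add convex_on_sum_fun)
      (auto intro!: convex_on_segment_comp simp: convex_real_interval)
  fix s :: real
  assume "s \<in> {0..1}"
  then show "total_cost N D C (gamma N p1 p2 s) = (\<Sum>(i, j)\<in>links N. D i j ((1 - s) * ?X i j + s * ?Y i j)) +
      (\<Sum>i\<in>nodes N. C i ((1 - s) * ?U i + s * ?W i))"
    by (simp add: total_cost_eq_loads flow_of_gamma[OF wf p1 p2] link_load_flow_comb node_load_flow_comb)
qed

theorem proposition3:
  fixes N :: "('v, 'a) network"
    and D :: "'v \<Rightarrow> 'v \<Rightarrow> real \<Rightarrow> real" and D' :: "'v \<Rightarrow> 'v \<Rightarrow> real \<Rightarrow> real"
    and C :: "'v \<Rightarrow> real \<Rightarrow> real" and C' :: "'v \<Rightarrow> real \<Rightarrow> real"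
  assumes "well_formed_network N"
    and "\<And>i j. (i, j) \<in> links N \<Longrightarrow> mono (D i j)"
    and "\<And>i j. (i, j) \<in> links N \<Longrightarrow> convex_on UNIV (D i j)"
    and "\<And>i j x. (i, j) \<in> links N \<Longrightarrow> (D i j has_real_derivative D' i j x) (at x)"
    and "\<And>i j. (i, j) \<in> links N \<Longrightarrow> continuous_on UNIV (D' i j)"
    and "\<And>i. i \<in> nodes N \<Longrightarrow> mono (C i)"
    and "\<And>i. i \<in> nodes N \<Longrightarrow> convex_on UNIV (C i)"
    and "\<And>i x. i \<in> nodes N \<Longrightarrow> (C i has_real_derivative C' i x) (at x)"
    and "\<And>i. i \<in> nodes N \<Longrightarrow> continuous_on UNIV (C' i)"
  shows "bij_betw (flow_of N) (pos_feasible N) (flow_of N ` pos_feasible N)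
       \<and> (\<forall>phi\<in>pos_feasible N. phi_of N (flow_of N phi) = phi)
       \<and> curve_family (pos_feasible N) (gamma N)
       \<and> geodesically_convex (pos_feasible N) (gamma N) (total_cost N D C)"
proof -
  have inverse: "\<forall>phi\<in>pos_feasible N. phi_of N (flow_of N phi) = phi"
    using phi_of_flow_of by blast
  then have "bij_betw (flow_of N) (pos_feasible N) (flow_of N ` pos_feasible N)"
    by (metis inj_on_inverseI inj_on_imp_bij_betw)
  moreover have "curve_family (pos_feasible N) (gamma N)"
    using phi_of_flow_of gamma_pos_feasible[OF assms(1)]
    unfolding curve_family_def by (auto simp: gamma_eq_phi_of_flow_comb flow_comb_def)
  moreover have "geodesically_convex (pos_feasible N) (gamma N) (total_cost N D C)"
    using convex_on_total_cost_gamma[of N _ _ D C] assms(1,3,7)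
    unfolding geodesically_convex_def by blast
  ultimately show ?thesis using inverse by blast
qed

end
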